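(* Let $\mathbb{F}_q$ be a finite field with $\mathrm{char}(\mathbb{F}_q)\ne 3$ in which $-3$ is a square, and let $\mathcal{Q}=\mathbb{F}_q^3$ with the relation: $(x_1,y_1,z_1)$ and $(x_2,y_2,z_2)$ commute iff $x_1y_2-y_1x_2=z_1-z_2$. Then $\mathcal{Q}$ contains a non-commuting subset of cardinality greater than $4q-12$.
   Context: A subset of $\mathcal{Q}$ is non-commuting if no two distinct elements of it commute. *)

theory Defs
  imports Main "HOL-Library.Cardinality"
begin

definition commutes :: "'a::field \<times> 'a \<times> 'a \<Rightarrow> 'a \<times> 'a \<times> 'a \<Rightarrow> bool" where
  "commutes p1 p2 = (case p1 of (x1, y1, z1) \<Rightarrow> case p2 of (x2, y2, z2) \<Rightarrow>
      x1 * y2 - y1 * x2 = z1 - z2)"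

definition non_commuting :: "('a::field \<times> 'a \<times> 'a) set \<Rightarrow> bool" where
  "non_commuting S = (\<forall>u\<in>S. \<forall>v\<in>S. u \<noteq> v \<longrightarrow> \<not> commutes u v)"

end

theory Submission
  imports Defs "HOL-Computational_Algebra.Primes"
begin

text \<open>In characteristic 2 the graph of an anisotropic binary quadratic form \<open>Q\<close> works: its
  polar form is then the alternating form \<open>x\<^sub>1 y\<^sub>2 - y\<^sub>1 x\<^sub>2\<close>, so two points of the graph
  commute only if \<open>Q\<close> vanishes on their difference; this gives \<open>q\<^sup>2\<close> points.
  Otherwise \<open>-3\<close> being a square yields a primitive sixth root of unity \<open>t\<close>, and we take four
  affine lines with directions \<open>(1, 0), (0, 1), (1, 1), (1, t)\<close>, parametrised by the third
  coordinate so that any two of them satisfy a determinant condition. Points on one line never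
  commute, and each pair of lines forces at most one excluded point on each of them, leaving
  at least \<open>4q - 12\<close> points; one further point commuting with none of them completes the set.\<close>

lemma commutes_iff: "commutes (x1, y1, z1) (x2, y2, z2) \<longleftrightarrow> x1 * y2 - y1 * x2 = z1 - z2"
  by (simp add: commutes_def)

lemma commutes_refl: "commutes p p"
  by (cases p) (simp add: commutes_iff)

lemma commutes_sym: "commutes p q \<longleftrightarrow> commutes q p"
  by (cases p, cases q) (auto simp: commutes_iff algebra_simps)

lemma non_commuting_insert:
  assumes "non_commuting S" and "\<And>q. q \<in> S \<Longrightarrow> \<not> commutes p q"
  shows "non_commuting (insert p S)" and "p \<notin> S"
  using assms commutes_refl commutes_sym unfolding non_commuting_def by blast+

lemma of_nat_prime_eq_0_iff_CHAR:
  assumes "prime p"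
  shows "of_nat p = (0 :: 'a :: {semiring_1, zero_neq_one}) \<longleftrightarrow> CHAR('a) = p"
  using assms by (auto simp: of_nat_eq_0_iff_char_dvd prime_nat_iff)

lemma quadratic_form_anisotropic:
  fixes b x y :: "'a :: field"
  assumes irreducible: "\<And>s. s * s + s + b \<noteq> 0" and zero: "x * x + x * y + b * y * y = 0"
  shows "x = 0 \<and> y = 0"
proof (cases "y = 0")
  case True
  with zero show ?thesis by simp
next
  case False
  have "(x / y) * (x / y) + x / y + b = (x * x + x * y + b * y * y) / (y * y)"
    using False by (simp add: field_simps)
  also have "\<dots> = 0"
    using zero by simp
  finally show ?thesis
    using irreducible by blast
qed

lemma char_2_exists_irreducible:
  assumes "(2 :: 'a :: {finite, field}) = 0"
  shows "\<exists>b :: 'a. \<forall>s. s * s + s + b \<noteq> 0"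
proof -
  let ?h = "\<lambda>s :: 'a. s * s + s"
  have collision: "?h 0 = ?h 1"
    using assms by simp
  have "\<not> inj ?h"
  proof
    assume "inj ?h"
    from injD[OF this collision] show False
      by simp
  qed
  hence "\<not> surj ?h"
    using finite_UNIV_surj_inj[of ?h] by auto
  then obtain c where "c \<notin> range ?h"
    by blast
  hence "\<forall>s. s * s + s + (- c) \<noteq> 0"
    by auto
  thus ?thesis ..
qed

lemma char_2_graph_commutes_imp_eq:
  fixes b :: "'a :: field"
  assumes two: "(2 :: 'a) = 0" and irreducible: "\<And>s. s * s + s + b \<noteq> 0"
    and comm: "commutes (x1, y1, x1 * x1 + x1 * y1 + b * y1 * y1) (x2, y2, x2 * x2 + x2 * y2 + b * y2 * y2)"
  shows "x1 = x2 \<and> y1 = y2"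
proof -
  let ?dx = "x1 - x2" and ?dy = "y1 - y2"
  have "?dx * ?dx + ?dx * ?dy + b * ?dy * ?dy
      = (x1 * x1 + x1 * y1 + b * y1 * y1) - (x2 * x2 + x2 * y2 + b * y2 * y2) - (x1 * y2 - y1 * x2)
        + 2 * (x2 * x2 - x1 * x2 - x2 * y1 + x2 * y2 - b * y1 * y2 + b * y2 * y2)"
    by (simp add: algebra_simps)
  hence "?dx * ?dx + ?dx * ?dy + b * ?dy * ?dy = 0"
    using comm two by (simp add: commutes_iff)
  hence "?dx = 0 \<and> ?dy = 0"
    by (rule quadratic_form_anisotropic[OF irreducible])
  thus ?thesis
    by simp
qed

lemma char_2_construction:
  assumes two: "(2 :: 'a :: {finite, field}) = 0"
  shows "\<exists>S :: ('a \<times> 'a \<times> 'a) set. non_commuting S \<and> int (card S) > 4 * int CARD('a) - 12"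
proof -
  obtain b :: 'a where irreducible: "\<And>s. s * s + s + b \<noteq> 0"
    using char_2_exists_irreducible[OF two] by blast
  define S where "S = range (\<lambda>(x, y). (x, y, x * x + x * y + b * y * y))"
  have "inj (\<lambda>(x :: 'a, y :: 'a). (x, y, x * x + x * y + b * y * y))"
    by (rule injI) (auto simp: split_beta)
  hence "card S = CARD('a) * CARD('a)"
    unfolding S_def by (simp add: card_image UNIV_Times_UNIV[symmetric] card_cartesian_product del: UNIV_Times_UNIV)
  moreover have "0 \<le> (int CARD('a) - 2)\<^sup>2"
    by simp
  ultimately have "int (card S) > 4 * int CARD('a) - 12"
    by (simp add: power2_eq_square algebra_simps)
  moreover have "non_commuting S"
    unfolding S_def non_commuting_def
    using char_2_graph_commutes_imp_eq[OF two irreducible] by auto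
  ultimately show ?thesis
    by blast
qed

text \<open>A point of line \<open>j\<close> is admissible if it avoids the one parameter value excluded by each
  other line; admissible points on different lines never commute.\<close>

locale line_family =
  fixes I :: "'i set" and u v a b :: "'i \<Rightarrow> 'a :: field"
  assumes slope_nonzero: "j \<in> I \<Longrightarrow> a j \<noteq> 0"
    and cross_det: "\<lbrakk>j \<in> I; k \<in> I; j \<noteq> k\<rbrakk> \<Longrightarrow>
      (u j * v k - v j * u k) * (a j * b k - b j * a k) = 1"
begin

definition wedge :: "'i \<Rightarrow> 'i \<Rightarrow> 'a" where
  "wedge j k = u j * v k - v j * u k"

definition point :: "'i \<Rightarrow> 'a \<Rightarrow> 'a \<times> 'a \<times> 'a" where
  "point j z = ((a j * z + b j) * u j, (a j * z + b j) * v j, z)"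

definition admissible :: "'i \<Rightarrow> 'a \<Rightarrow> bool" where
  "admissible j z \<longleftrightarrow> (\<forall>k \<in> I - {j}. wedge j k * a k * (a j * z + b j) + 1 \<noteq> 0)"

definition admissible_points :: "('i \<times> 'a) set" where
  "admissible_points = (SIGMA j:I. {z. admissible j z})"

lemma admissibleD:
  "\<lbrakk>admissible j z; k \<in> I; k \<noteq> j\<rbrakk> \<Longrightarrow> wedge j k * a k * (a j * z + b j) + 1 \<noteq> 0"
  by (simp add: admissible_def)

lemma commutes_point:
  "commutes (point j z) (point k z') \<longleftrightarrow> (a j * z + b j) * (a k * z' + b k) * wedge j k = z - z'"
  by (simp add: point_def wedge_def commutes_iff algebra_simps)

lemma not_commutes_same_line: "z \<noteq> z' \<Longrightarrow> \<not> commutes (point j z) (point j z')"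
  by (simp add: commutes_point wedge_def)

lemma not_commutes_distinct_lines:
  assumes "j \<in> I" "k \<in> I" "j \<noteq> k" and "admissible j z" "admissible k z'"
  shows "\<not> commutes (point j z) (point k z')"
proof
  assume "commutes (point j z) (point k z')"
  hence comm: "(a j * z + b j) * (a k * z' + b k) * wedge j k = z - z'"
    by (simp add: commutes_point)
  have factor_j: "wedge j k * a k * (a j * z + b j) + 1 \<noteq> 0"
    using admissibleD[OF assms(4,2)] assms(3) by simp
  have "wedge k j * a j * (a k * z' + b k) + 1 \<noteq> 0"
    using admissibleD[OF assms(5,1)] assms(3) by simp
  hence factor_k: "wedge j k * a j * (a k * z' + b k) - 1 \<noteq> 0"
    by (simp add: wedge_def algebra_simps)
  have det: "wedge j k * (a j * b k - b j * a k) = 1"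
    using cross_det[OF assms(1-3)] by (simp add: wedge_def)
  \<comment> \<open>the two admissibility factors multiply to a multiple of the commutation defect\<close>
  have "(wedge j k * a k * (a j * z + b j) + 1) * (wedge j k * a j * (a k * z' + b k) - 1)
      = wedge j k * a j * a k * ((a j * z + b j) * (a k * z' + b k) * wedge j k - (z - z'))
        + (wedge j k * (a j * b k - b j * a k) - 1)"
    by (simp add: algebra_simps)
  also have "\<dots> = 0"
    using comm det by simp
  finally show False
    using factor_j factor_k by simp
qed

lemma not_commutes_admissible_points:
  assumes "(j, z) \<in> admissible_points" "(k, z') \<in> admissible_points" "(j, z) \<noteq> (k, z')"
  shows "\<not> commutes (point j z) (point k z')"
proof (cases "j = k")
  case True
  with assms(3) show ?thesis
    using not_commutes_same_line by simp
next
  case False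
  with assms(1,2) show ?thesis
    using not_commutes_distinct_lines by (simp add: admissible_points_def)
qed

lemma inj_on_point_admissible_points: "inj_on (\<lambda>(j, z). point j z) admissible_points"
  using not_commutes_admissible_points commutes_refl by (fastforce intro: inj_onI)

lemma non_commuting_admissible_points:
  "non_commuting ((\<lambda>(j, z). point j z) ` admissible_points)"
  using not_commutes_admissible_points by (fastforce simp: non_commuting_def)

lemma card_not_admissible_le:
  assumes "finite I" and "j \<in> I"
  shows "card {z. \<not> admissible j z} \<le> card I - 1"
proof -
  define excluded where
    "excluded k = - (1 + wedge j k * a k * b j) / (wedge j k * a k * a j)" for k
  have "{z. \<not> admissible j z} \<subseteq> excluded ` (I - {j})"
  proof
    fix z assume "z \<in> {z. \<not> admissible j z}"
    then obtain k where k: "k \<in> I" "k \<noteq> j" and zero: "wedge j k * a k * (a j * z + b j) + 1 = 0"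
      by (auto simp: admissible_def)
    have "wedge j k \<noteq> 0"
      using cross_det[OF assms(2) k(1) k(2)[symmetric]] by (auto simp: wedge_def)
    hence nonzero: "wedge j k * a k * a j \<noteq> 0"
      using slope_nonzero assms(2) k(1) by simp
    have "wedge j k * a k * a j * z = (wedge j k * a k * (a j * z + b j) + 1) - (1 + wedge j k * a k * b j)"
      by (simp add: algebra_simps)
    hence "wedge j k * a k * a j * z = - (1 + wedge j k * a k * b j)"
      using zero by simp
    hence "z = excluded k"
      using nonzero by (simp add: excluded_def field_simps)
    thus "z \<in> excluded ` (I - {j})"
      using k by blast
  qed
  hence "card {z. \<not> admissible j z} \<le> card (excluded ` (I - {j}))"
    using assms by (intro card_mono) auto
  also have "\<dots> \<le> card (I - {j})"
    using assms by (intro card_image_le) auto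
  also have "\<dots> = card I - 1"
    using assms by simp
  finally show ?thesis .
qed

lemma card_admissible_points_ge:
  assumes "finite I" and "finite (UNIV :: 'a set)"
  shows "card I * (CARD('a) - (card I - 1)) \<le> card admissible_points"
proof -
  have "CARD('a) - (card I - 1) \<le> card {z. admissible j z}" if "j \<in> I" for j
  proof -
    have "{z. admissible j z} = UNIV - {z. \<not> admissible j z}"
      by blast
    hence "card {z. admissible j z} = CARD('a) - card {z. \<not> admissible j z}"
      using assms(2) by (simp add: card_Diff_subset)
    thus ?thesis
      using card_not_admissible_le[OF assms(1) that] by linarith
  qed
  hence "card I * (CARD('a) - (card I - 1)) \<le> (\<Sum>j\<in>I. card {z. admissible j z})"
    using sum_bounded_below[of I "CARD('a) - (card I - 1)"] by simp
  also have "\<dots> = card admissible_points"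
    unfolding admissible_points_def
    by (simp add: card_SigmaI[OF assms(1)] finite_subset[OF subset_UNIV assms(2)])
  finally show ?thesis .
qed

end

definition line_dir_x :: "nat \<Rightarrow> 'a :: field" where
  "line_dir_x j = [1, 0, 1, 1] ! j"

definition line_dir_y :: "'a :: field \<Rightarrow> nat \<Rightarrow> 'a" where
  "line_dir_y t j = [0, 1, 1, t] ! j"

definition line_slope :: "'a :: field \<Rightarrow> nat \<Rightarrow> 'a" where
  "line_slope t j = [1, 1, 2, 2 - t] ! j"

definition line_offset :: "'a :: field \<Rightarrow> nat \<Rightarrow> 'a" where
  "line_offset t j = [0, 1, 1, 1 - t] ! j"

lemmas line_data_defs = line_dir_x_def line_dir_y_def line_slope_def line_offset_def

lemma less_4_cases: "(j :: nat) < 4 \<Longrightarrow> j = 0 \<or> j = 1 \<or> j = 2 \<or> j = 3"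
  by auto

lemma commutes_extra_point:
  fixes c t :: "'a :: field"
  assumes "c \<noteq> 0"
  shows "commutes (1 / c, 1, - t / c) (x, y, z) \<longleftrightarrow> y - c * x + t + c * z = 0"
proof -
  have "commutes (1 / c, 1, - t / c) (x, y, z) \<longleftrightarrow> c * (y / c - x) = c * (- t / c - z)"
    using assms by (simp add: commutes_iff)
  also have "\<dots> \<longleftrightarrow> y - c * x = - t - c * z"
    using assms by (simp add: right_diff_distrib)
  also have "\<dots> \<longleftrightarrow> y - c * x + t + c * z = 0"
    by algebra
  finally show ?thesis .
qed

context
  fixes t :: "'a :: field"
  assumes two: "(2 :: 'a) \<noteq> 0" and three: "(3 :: 'a) \<noteq> 0" and sixth_root: "t * t - t + 1 = 0"
begin

lemma sixth_root_sq: "t * t = t - 1"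
  using sixth_root by (simp add: algebra_simps eq_neg_iff_add_eq_0)

lemma sixth_root_sq_mult: "t * (t * x) = t * x - x"
  by (simp add: sixth_root_sq left_diff_distrib flip: mult.assoc)

lemma sixth_root_ne: "t \<noteq> 0" "t \<noteq> 1" "t \<noteq> 2" "1 + t \<noteq> 0"
proof -
  show "t \<noteq> 0" "t \<noteq> 1" "t \<noteq> 2"
    using sixth_root three by auto
  show "1 + t \<noteq> 0"
  proof
    assume "1 + t = 0"
    hence "t = - 1"
      by (simp add: eq_neg_iff_add_eq_0 add.commute)
    with sixth_root three show False
      by simp
  qed
qed

lemma hexagonal_line_family:
  "line_family {..<4} line_dir_x (line_dir_y t) (line_slope t) (line_offset t)"
proof
  fix j assume "j \<in> {..<4 :: nat}"
  thus "line_slope t j \<noteq> 0"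
    using less_4_cases[of j] two sixth_root_ne by (auto simp: line_slope_def)
next
  fix j k assume "j \<in> {..<4 :: nat}" "k \<in> {..<4 :: nat}" "j \<noteq> k"
  thus "(line_dir_x j * line_dir_y t k - line_dir_y t j * line_dir_x k)
      * (line_slope t j * line_offset t k - line_offset t j * line_slope t k) = 1"
    using less_4_cases[of j] less_4_cases[of k]
    by (auto simp: line_data_defs algebra_simps sixth_root_sq sixth_root_sq_mult)
qed

interpretation hexagonal: line_family "{..<4}" line_dir_x "line_dir_y t" "line_slope t" "line_offset t"
  by (rule hexagonal_line_family)

text \<open>On line 0 the extra point's commutation condition fails outright; on lines 1, 2 and 3 it
  forces the parameter value excluded by line 2, 3 and 1 respectively.\<close>

lemma extra_point_not_commutes:
  assumes c: "1 + 2 * t \<noteq> 0" and jz: "(j, z) \<in> hexagonal.admissible_points"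
  shows "\<not> commutes (1 / (1 + 2 * t), 1, - t / (1 + 2 * t)) (hexagonal.point j z)"
proof
  assume "commutes (1 / (1 + 2 * t), 1, - t / (1 + 2 * t)) (hexagonal.point j z)"
  hence rel: "(line_slope t j * z + line_offset t j) * line_dir_y t j
      - (1 + 2 * t) * ((line_slope t j * z + line_offset t j) * line_dir_x j) + t + (1 + 2 * t) * z = 0"
    unfolding hexagonal.point_def commutes_extra_point[OF c] .
  from jz have j: "j < 4" and adm: "hexagonal.admissible j z"
    by (auto simp: hexagonal.admissible_points_def)
  note excluded = hexagonal.admissibleD[OF adm]
  consider "j = 0" | "j = 1" | "j = 2" | "j = 3"
    using less_4_cases[OF j] by blast
  thus False
  proof cases
    case 1
    with rel have "t = 0"
      by (simp add: line_data_defs algebra_simps)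
    with sixth_root_ne show False by simp
  next
    case 2
    with rel have "(2 * z + 1) * (1 + t) = 0"
      by (simp add: line_data_defs algebra_simps)
    hence "2 * z + 1 = 0"
      using sixth_root_ne(4) by simp
    moreover have "hexagonal.wedge j 2 * line_slope t 2 * (line_slope t j * z + line_offset t j) + 1
        = - (2 * z + 1)"
      using 2 by (simp add: hexagonal.wedge_def line_data_defs algebra_simps)
    ultimately show False
      using excluded[of 2] 2 by simp
  next
    case 3
    with rel have rel3: "z * (1 - 2 * t) - t = 0"
      by (simp add: line_data_defs algebra_simps)
    have "hexagonal.wedge j 3 * line_slope t 3 * (line_slope t j * z + line_offset t j) + 1
        = - 2 * (z * (1 - 2 * t) - t) - (2 * z + 1) * (t * t - t + 1)"
      using 3 by (simp add: hexagonal.wedge_def line_data_defs algebra_simps)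
    thus False
      using excluded[of 3] 3 rel3 sixth_root by simp
  next
    case 4
    have "(line_slope t j * z + line_offset t j) * line_dir_y t j
        - (1 + 2 * t) * ((line_slope t j * z + line_offset t j) * line_dir_x j) + t + (1 + 2 * t) * z
        = 2 * (t - 1) * (z + 1) + (z + 1) * (t * t - t + 1)"
      using 4 by (simp add: line_data_defs algebra_simps)
    hence "2 * (t - 1) * (z + 1) = 0"
      using rel sixth_root by simp
    hence "z + 1 = 0"
      using two sixth_root_ne(2) by simp
    moreover have "hexagonal.wedge j 1 * line_slope t 1 * (line_slope t j * z + line_offset t j) + 1
        = (2 - t) * (z + 1)"
      using 4 by (simp add: hexagonal.wedge_def line_data_defs algebra_simps)
    ultimately show False
      using excluded[of 1] 4 by simp
  qed
qed

lemma hexagonal_construction: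
  assumes c: "1 + 2 * t \<noteq> 0" and "finite (UNIV :: 'a set)"
  shows "\<exists>S :: ('a \<times> 'a \<times> 'a) set. non_commuting S \<and> int (card S) > 4 * int CARD('a) - 12"
proof -
  let ?T = "(\<lambda>(j, z). hexagonal.point j z) ` hexagonal.admissible_points"
  let ?p = "(1 / (1 + 2 * t), 1, - t / (1 + 2 * t))"
  have "\<not> commutes ?p q" if "q \<in> ?T" for q
    using that extra_point_not_commutes[OF c] by force
  note extend = non_commuting_insert[OF hexagonal.non_commuting_admissible_points this]
  have "4 * (CARD('a) - 3) \<le> card hexagonal.admissible_points"
    using hexagonal.card_admissible_points_ge assms(2) by simp
  also have "\<dots> = card ?T"
    by (rule card_image[OF hexagonal.inj_on_point_admissible_points, symmetric])
  also have "\<dots> < card (insert ?p ?T)"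
  proof -
    have "finite (UNIV :: ('a \<times> 'a \<times> 'a) set)"
      using assms(2) by (metis UNIV_Times_UNIV finite_cartesian_product)
    hence "finite ?T"
      by (rule finite_subset[OF subset_UNIV])
    thus ?thesis
      using extend(2) by simp
  qed
  finally have "int (card (insert ?p ?T)) > 4 * int CARD('a) - 12"
    by linarith
  with extend(1) show ?thesis
    by blast
qed

end

lemma sixth_root_exists:
  fixes r :: "'a :: field"
  assumes two: "(2 :: 'a) \<noteq> 0" and r: "r * r = - 3"
  shows "\<exists>t :: 'a. t * t - t + 1 = 0 \<and> 1 + 2 * t \<noteq> 0"
proof -
  have four: "(4 :: 'a) \<noteq> 0"
    using two by (metis mult_2_right mult_eq_0_iff numeral_Bit0)
  have root: "s * s - s + 1 = 0" if "2 * s = 1 + e" "e * e = - 3" for s e :: 'a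
  proof -
    have "4 * (s * s - s + 1) = 0"
      using that by algebra
    with four show ?thesis
      by (metis mult_eq_0_iff)
  qed
  \<comment> \<open>the roots \<open>(1 \<plusminus> r) / 2\<close> have \<open>1 + 2t = 2 \<plusminus> r\<close>, which cannot both vanish\<close>
  have half_plus: "2 * ((1 + r) / 2) = 1 + r" and half_minus: "2 * ((1 - r) / 2) = 1 + (- r)"
    using two by simp_all
  have "(1 + (1 + r)) + (1 + (1 + - r)) = (4 :: 'a)"
    by simp
  hence "1 + (1 + r) \<noteq> 0 \<or> 1 + (1 + - r) \<noteq> 0"
    using four by auto
  thus ?thesis
  proof
    assume nonzero: "1 + (1 + r) \<noteq> 0"
    show ?thesis
    proof (intro exI conjI)
      show "(1 + r) / 2 * ((1 + r) / 2) - (1 + r) / 2 + 1 = 0"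
        by (rule root[OF half_plus r])
      show "1 + 2 * ((1 + r) / 2) \<noteq> 0"
        by (subst half_plus) (rule nonzero)
    qed
  next
    assume nonzero: "1 + (1 + - r) \<noteq> 0"
    have "- r * - r = - 3"
      using r by simp
    show ?thesis
    proof (intro exI conjI)
      show "(1 - r) / 2 * ((1 - r) / 2) - (1 - r) / 2 + 1 = 0"
        by (rule root[OF half_minus \<open>- r * - r = - 3\<close>])
      show "1 + 2 * ((1 - r) / 2) \<noteq> 0"
        by (subst half_minus) (rule nonzero)
    qed
  qed
qed

theorem lemma7p7:
  assumes "CHAR('a::{finite,field}) \<noteq> 3"
    and "\<exists>r::'a. r * r = - 3"
  shows "\<exists>S :: ('a \<times> 'a \<times> 'a) set. non_commuting S \<and>
           int (card S) > 4 * int (CARD('a)) - 12"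
proof (cases "CHAR('a) = 2")
  case True
  hence "(2 :: 'a) = 0"
    using of_nat_prime_eq_0_iff_CHAR[of 2, where 'a = 'a] by simp
  thus ?thesis
    by (rule char_2_construction)
next
  case False
  hence two: "(2 :: 'a) \<noteq> 0"
    using of_nat_prime_eq_0_iff_CHAR[of 2, where 'a = 'a] by simp
  have three: "(3 :: 'a) \<noteq> 0"
    using assms(1) of_nat_prime_eq_0_iff_CHAR[of 3, where 'a = 'a] by simp
  obtain t :: 'a where "t * t - t + 1 = 0" "1 + 2 * t \<noteq> 0"
    using sixth_root_exists[OF two] assms(2) by blast
  thus ?thesis
    using hexagonal_construction[OF two three] by simp
qed

end
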